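(* Let $s > 3/2$ be real. For $1/3 \le A \le 1$ define \[ L(A;s) = \sum_{\substack{i,j,k\in\mathbb{Z}\\ (i,j,k)\neq(0,0,0)}} \left(\frac{A+1}{A(i+j)^2+(j+k)^2+(i+k)^2}\right)^s . \] Then \[ \frac{\partial}{\partial A} L(A;s)\Big|_{A=1/2} = 0 \qquad\text{and}\qquad \frac{\partial^2}{\partial A^2} L(A;s)\Big|_{A=1/2} > 0 . \]
   Context: The function $L(A;s)$ is the Epstein zeta function of the normalised cuboidal lattice. For $u,v>0$ with $A=u^2/v^2$, the cuboidal lattice is generated by $(u,v,0)$, $(u,0,v)$, $(0,v,v)$. For $1/3\le A\le 1$ it is scaled so that its minimum nonzero squared norm is $1$, i.e. $v = 1/\sqrt{A+1}$. Its quadratic form is then $g(A;i,j,k) = \frac{1}{A+1}\bigl(A(i+j)^2+(j+k)^2+(i+k)^2\bigr)$, and the series defining $L(A;s)$ converges for $s>3/2$. The value $A=1/2$ corresponds to the body-centred cubic lattice, and $A=1$ to the face-centred cubic lattice. *)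

theory Defs
  imports "HOL-Analysis.Analysis"
begin

definition cub_form :: "real \<Rightarrow> int \<Rightarrow> int \<Rightarrow> int \<Rightarrow> real" where
  "cub_form A i j k = A * (real_of_int (i + j))^2 + (real_of_int (j + k))^2 + (real_of_int (i + k))^2"

definition L :: "real \<Rightarrow> real \<Rightarrow> real" where
  "L A s = (\<Sum>\<^sub>\<infinity>(i,j,k)\<in>(UNIV - {(0,0,0)} :: (int \<times> int \<times> int) set).
              ((A + 1) / cub_form A i j k) powr s)"

end

theory Submission
  imports Defs
begin

(*
  Each summand ((A + 1) / (A a + b))^s, with a = (i + j)^2 and b = (j + k)^2 + (i + k)^2, is
  smooth in A, and on the neighbourhood (1/4, 1) of 1/2, where A a + b >= (a + b) / 4, it and its
  first three derivatives are bounded by constants times (a + b)^(-s) <= (i^2 + j^2 + k^2)^(-s).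
  Since (1 + |t|)^2 <= 4 (i^2 + j^2 + k^2) for each coordinate t, this majorant is dominated by
  a product of three one-dimensional sums of (1 + |n|)^(-2s/3), which converge for s > 3/2.
  Hence L may be differentiated termwise twice.

  At A = 1/2 put x = i + j, y = i + j + 2k, z = j - i, so that a + 2b = x^2 + y^2 + z^2. The
  first derivative of each summand is a function of x^2 + y^2 + z^2 times 2x^2 - y^2 - z^2, and
  the lattice automorphisms exchanging x with y and x with z make the sum vanish. The second
  derivative plus a multiple of the first is s (s + 1) times a sum of non-negative terms, not
  all zero, so the second derivative is positive.
*)

section \<open>Termwise differentiation of infinite sums\<close>

lemma has_sum_diff:
  fixes f g :: "'a \<Rightarrow> 'b::topological_ab_group_add"
  assumes "(f has_sum a) A" "(g has_sum b) A"
  shows "((\<lambda>x. f x - g x) has_sum (a - b)) A"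
proof -
  have "((\<lambda>x. - g x) has_sum - b) A" using assms(2) by (simp add: has_sum_uminus)
  from has_sum_add[OF assms(1) this] show ?thesis by simp
qed

lemma has_sum_abs_le:
  fixes f g :: "'a \<Rightarrow> real"
  assumes f: "(f has_sum a) A" and g: "(g has_sum b) A" and le: "\<And>x. x \<in> A \<Longrightarrow> \<bar>f x\<bar> \<le> g x"
  shows "\<bar>a\<bar> \<le> b"
proof -
  have "a \<le> b"
    by (rule has_sum_mono[OF f g]) (use le in \<open>simp add: abs_le_iff\<close>)
  moreover have "((\<lambda>x. - f x) has_sum - a) A"
    using f by (simp add: has_sum_uminus)
  then have "- a \<le> b"
    by (rule has_sum_mono[OF _ g]) (use le in \<open>simp add: abs_le_iff\<close>)
  ultimately show ?thesis by simp
qed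

lemma summable_on_abs_le:
  fixes f g :: "'a \<Rightarrow> real"
  assumes "g summable_on A" "\<And>x. x \<in> A \<Longrightarrow> \<bar>f x\<bar> \<le> g x"
  shows "f summable_on A"
proof -
  have "(\<lambda>x. norm (f x)) summable_on A"
    by (rule summable_on_comparison_test[OF assms(1)]) (use assms(2) in auto)
  then show ?thesis by (subst summable_on_iff_abs_summable_on_real)
qed

lemma taylor_remainder_abs_le:
  fixes f f' f'' :: "real \<Rightarrow> real"
  assumes f: "\<And>t. t \<in> closed_segment x y \<Longrightarrow> (f has_real_derivative f' t) (at t)"
    and f': "\<And>t. t \<in> closed_segment x y \<Longrightarrow> (f' has_real_derivative f'' t) (at t)"
    and f'': "\<And>t. t \<in> closed_segment x y \<Longrightarrow> \<bar>f'' t\<bar> \<le> M"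
  shows "\<bar>f y - f x - f' x * (y - x)\<bar> \<le> M * (y - x)^2"
proof -
  have f'_lip: "\<bar>f' t - f' x\<bar> \<le> M * \<bar>y - x\<bar>" if t: "t \<in> closed_segment x y" for t
  proof -
    have "norm (f' t - f' x) \<le> M * norm (t - x)"
    proof (rule field_differentiable_bound[OF convex_closed_segment])
      fix z assume "z \<in> closed_segment x y"
      then show "(f' has_field_derivative f'' z) (at z within closed_segment x y)"
        using f' has_field_derivative_at_within by blast
    next
      fix z assume "z \<in> closed_segment x y"
      then show "norm (f'' z) \<le> M" using f'' by simp
    qed (simp_all add: t)
    also have "\<dots> \<le> M * \<bar>y - x\<bar>"
      using segment_bound1[OF t] f''[OF t] by (intro mult_left_mono) auto
    finally show ?thesis by simp
  qed
  define g where "g t = f t - f' x * t" for t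
  have "norm (g y - g x) \<le> M * \<bar>y - x\<bar> * norm (y - x)"
  proof (rule field_differentiable_bound[OF convex_closed_segment])
    fix z assume "z \<in> closed_segment x y"
    then have "(g has_field_derivative f' z - f' x) (at z)"
      unfolding g_def by (auto intro!: derivative_eq_intros f)
    then show "(g has_field_derivative f' z - f' x) (at z within closed_segment x y)"
      by (rule has_field_derivative_at_within)
  next
    fix z assume "z \<in> closed_segment x y"
    then show "norm (f' z - f' x) \<le> M * \<bar>y - x\<bar>" using f'_lip by simp
  qed simp_all
  then show ?thesis by (simp add: g_def power2_eq_square algebra_simps)
qed

lemma has_real_derivative_of_quadratic_remainder:
  fixes F :: "real \<Rightarrow> real"
  assumes "open S" "x \<in> S" and rem: "\<And>y. y \<in> S \<Longrightarrow> \<bar>F y - F x - D * (y - x)\<bar> \<le> C * (y - x)^2"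
  shows "(F has_real_derivative D) (at x)"
proof -
  have "\<forall>\<^sub>F y in at x. norm ((F y - F x) / (y - x) - D) \<le> C * \<bar>y - x\<bar>"
    using eventually_at_in_open[OF assms(1,2)]
  proof eventually_elim
    case (elim y)
    then have "\<bar>y - x\<bar> > 0" by auto
    have "((F y - F x) / (y - x) - D) * (y - x) = F y - F x - D * (y - x)"
      using \<open>\<bar>y - x\<bar> > 0\<close> by (simp add: field_simps)
    then have "\<bar>(F y - F x) / (y - x) - D\<bar> * \<bar>y - x\<bar> = \<bar>F y - F x - D * (y - x)\<bar>"
      by (metis abs_mult)
    also have "\<dots> \<le> C * (y - x)^2"
      using rem elim by blast
    also have "\<dots> = (C * \<bar>y - x\<bar>) * \<bar>y - x\<bar>"
      by (metis power2_abs power2_eq_square mult.assoc)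
    finally have "\<bar>(F y - F x) / (y - x) - D\<bar> * \<bar>y - x\<bar> \<le> (C * \<bar>y - x\<bar>) * \<bar>y - x\<bar>" .
    then show ?case
      using \<open>\<bar>y - x\<bar> > 0\<close> mult_right_le_imp_le real_norm_def by metis
  qed
  moreover have "((\<lambda>y. C * \<bar>y - x\<bar>) \<longlongrightarrow> C * \<bar>x - x\<bar>) (at x)"
    by (intro tendsto_intros)
  then have "((\<lambda>y. C * \<bar>y - x\<bar>) \<longlongrightarrow> 0) (at x)"
    by simp
  ultimately have "((\<lambda>y. (F y - F x) / (y - x) - D) \<longlongrightarrow> 0) (at x)"
    by (rule Lim_null_comparison)
  then show ?thesis
    unfolding has_field_derivative_iff by (rule LIM_zero_cancel)
qed

lemma has_real_derivative_has_sum: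
  fixes f f' f'' :: "'i \<Rightarrow> real \<Rightarrow> real"
  assumes S: "open S" "convex S" "x \<in> S"
    and f: "\<And>n t. n \<in> K \<Longrightarrow> t \<in> S \<Longrightarrow> (f n has_real_derivative f' n t) (at t)"
    and f': "\<And>n t. n \<in> K \<Longrightarrow> t \<in> S \<Longrightarrow> (f' n has_real_derivative f'' n t) (at t)"
    and f'': "\<And>n t. n \<in> K \<Longrightarrow> t \<in> S \<Longrightarrow> \<bar>f'' n t\<bar> \<le> M n"
    and M: "M summable_on K"
    and F: "\<And>t. t \<in> S \<Longrightarrow> ((\<lambda>n. f n t) has_sum F t) K"
    and D: "((\<lambda>n. f' n x) has_sum D) K"
  shows "(F has_real_derivative D) (at x)"
proof (rule has_real_derivative_of_quadratic_remainder[OF S(1,3)])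
  fix y assume y: "y \<in> S"
  have segment: "closed_segment x y \<subseteq> S"
    using S y by (simp add: closed_segment_subset)
  have "((\<lambda>n. f n y - f n x - f' n x * (y - x)) has_sum F y - F x - D * (y - x)) K"
    by (intro has_sum_diff has_sum_cmult_left F y S D)
  moreover have "((\<lambda>n. M n * (y - x)^2) has_sum infsum M K * (y - x)^2) K"
    using M by (intro has_sum_cmult_left) simp
  moreover have "\<bar>f n y - f n x - f' n x * (y - x)\<bar> \<le> M n * (y - x)^2" if "n \<in> K" for n
    by (rule taylor_remainder_abs_le) (use that segment f f' f'' in blast)+
  ultimately show "\<bar>F y - F x - D * (y - x)\<bar> \<le> infsum M K * (y - x)^2"
    by (rule has_sum_abs_le)
qed

section \<open>The summands and their derivatives\<close>

definition cub_term :: "real \<Rightarrow> real \<Rightarrow> real \<Rightarrow> real \<Rightarrow> real" where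
  "cub_term s a b A = ((A + 1) / (A * a + b)) powr s"

definition cub_alpha :: "real \<Rightarrow> real \<Rightarrow> real \<Rightarrow> real" where
  "cub_alpha a b A = a / (A * a + b)"

definition cub_beta :: "real \<Rightarrow> real" where
  "cub_beta A = 1 / (A + 1)"

text \<open>Since the derivatives of \<^const>\<open>cub_alpha\<close> and \<^const>\<open>cub_beta\<close> are minus their
  squares and the logarithmic derivative of \<^const>\<open>cub_term\<close> is \<open>-s (\<alpha> - \<beta>)\<close>, the first three
  derivatives of \<^const>\<open>cub_term\<close> are \<open>s\<close> times the summand times polynomials in \<open>\<alpha>\<close> and \<open>\<beta>\<close>.\<close>

definition cub_term_d1 :: "real \<Rightarrow> real \<Rightarrow> real \<Rightarrow> real \<Rightarrow> real" where
  "cub_term_d1 s a b A = - s * cub_term s a b A * (cub_alpha a b A - cub_beta A)"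

definition cub_term_d2 :: "real \<Rightarrow> real \<Rightarrow> real \<Rightarrow> real \<Rightarrow> real" where
  "cub_term_d2 s a b A = s * cub_term s a b A *
     (s * (cub_alpha a b A - cub_beta A)^2 + ((cub_alpha a b A)^2 - (cub_beta A)^2))"

definition cub_term_d3 :: "real \<Rightarrow> real \<Rightarrow> real \<Rightarrow> real \<Rightarrow> real" where
  "cub_term_d3 s a b A = - s * cub_term s a b A *
     (s^2 * (cub_alpha a b A - cub_beta A)^3
      + 3 * s * (cub_alpha a b A - cub_beta A) * ((cub_alpha a b A)^2 - (cub_beta A)^2)
      + 2 * ((cub_alpha a b A)^3 - (cub_beta A)^3))"

lemma has_real_derivative_cub_alpha:
  assumes "A * a + b \<noteq> 0"
  shows "(cub_alpha a b has_real_derivative - ((cub_alpha a b A)^2)) (at A)"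
  unfolding cub_alpha_def[abs_def] using assms
  by (auto intro!: derivative_eq_intros simp: power2_eq_square field_simps)

lemma has_real_derivative_cub_beta:
  assumes "A + 1 \<noteq> 0"
  shows "(cub_beta has_real_derivative - ((cub_beta A)^2)) (at A)"
  unfolding cub_beta_def[abs_def] using assms
  by (auto intro!: derivative_eq_intros simp: power2_eq_square field_simps)

lemma has_real_derivative_cub_term:
  assumes Q: "A * a + b > 0" and A: "A + 1 > 0"
  shows "(cub_term s a b has_real_derivative cub_term_d1 s a b A) (at A)"
proof -
  define g where "g A = (A + 1) / (A * a + b)" for A
  have g_pos: "g A > 0" using Q A by (simp add: g_def)
  have quotient_rule: "(g has_real_derivative (1 * (A * a + b) - (A + 1) * a) / ((A * a + b) * (A * a + b))) (at A)"
    unfolding g_def[abs_def] using Q by (auto intro!: derivative_eq_intros)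
  have "(1 * q - c * a) / (q * q) = - (c / q) * (a / q - 1 / c)" if "q \<noteq> 0" "c \<noteq> 0" for q c :: real
    using that by (simp add: field_simps)
  from this[of "A * a + b" "A + 1"] Q A
  have "(g has_real_derivative - g A * (cub_alpha a b A - cub_beta A)) (at A)"
    using quotient_rule by (simp add: g_def cub_alpha_def cub_beta_def)
  from DERIV_fun_powr[OF this g_pos, of s]
  have "((\<lambda>A. g A powr s) has_real_derivative
          s * (g A powr s / g A) * (- g A * (cub_alpha a b A - cub_beta A))) (at A)"
    using g_pos by (simp add: powr_diff)
  moreover have "(\<lambda>A. g A powr s) = cub_term s a b"
    by (simp add: fun_eq_iff g_def cub_term_def)
  moreover have "s * (g A powr s / g A) * (- g A * (cub_alpha a b A - cub_beta A)) = cub_term_d1 s a b A"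
    using g_pos by (simp add: cub_term_d1_def cub_term_def flip: g_def)
  ultimately show ?thesis
    by simp
qed

lemma has_real_derivative_cub_term_d1:
  assumes "A * a + b > 0" "A + 1 > 0"
  shows "(cub_term_d1 s a b has_real_derivative cub_term_d2 s a b A) (at A)"
  unfolding cub_term_d1_def [abs_def]
  by (rule DERIV_cong[OF DERIV_mult'[OF DERIV_cmult[OF has_real_derivative_cub_term]
          DERIV_diff[OF has_real_derivative_cub_alpha has_real_derivative_cub_beta]]])
    (use assms in \<open>auto simp: cub_term_d1_def cub_term_d2_def algebra_simps power2_eq_square\<close>)

lemma has_real_derivative_cub_term_d2:
  assumes "A * a + b > 0" "A + 1 > 0"
  shows "(cub_term_d2 s a b has_real_derivative cub_term_d3 s a b A) (at A)"
  unfolding cub_term_d2_def [abs_def]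
  by (rule DERIV_cong[OF DERIV_mult'[OF DERIV_cmult[OF has_real_derivative_cub_term]
          DERIV_add[OF DERIV_cmult[OF DERIV_power[OF
                DERIV_diff[OF has_real_derivative_cub_alpha has_real_derivative_cub_beta]]]
            DERIV_diff[OF DERIV_power[OF has_real_derivative_cub_alpha]
                DERIV_power[OF has_real_derivative_cub_beta]]]]])
    (use assms in \<open>auto simp: cub_term_d1_def cub_term_d3_def algebra_simps power2_eq_square
        power3_eq_cube\<close>)

lemma cub_term_basic_bounds:
  assumes a: "a \<ge> 0" and b: "b \<ge> 0" and ab: "a + b > 0" and A: "A \<in> {1/4<..<1}"
  shows "A * a + b > 0"
    and "0 \<le> cub_alpha a b A" "cub_alpha a b A \<le> 4"
    and "0 \<le> cub_beta A" "cub_beta A \<le> 1"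
    and "0 \<le> cub_term s a b A"
    and "s \<ge> 0 \<Longrightarrow> cub_term s a b A \<le> 8 powr s * (a + b) powr - s"
proof -
  have "(1 / 4) * a \<le> A * a" using A a by (intro mult_right_mono) auto
  then have Q_ge: "(a + b) / 4 \<le> A * a + b" using b by simp
  show Q_pos: "A * a + b > 0" using ab by (intro less_le_trans[OF _ Q_ge]) simp
  show "0 \<le> cub_alpha a b A" using Q_pos a by (simp add: cub_alpha_def)
  show "cub_alpha a b A \<le> 4" using Q_ge Q_pos b by (simp add: cub_alpha_def divide_le_eq)
  show "0 \<le> cub_beta A" "cub_beta A \<le> 1" using A by (simp_all add: cub_beta_def)
  show "0 \<le> cub_term s a b A" by (simp add: cub_term_def)
  assume s: "s \<ge> 0"
  have "(A + 1) / (A * a + b) \<le> 2 / ((a + b) / 4)"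
    using A Q_pos Q_ge ab by (intro frac_le) auto
  then have "cub_term s a b A \<le> (8 / (a + b)) powr s"
    unfolding cub_term_def using A Q_pos s by (intro powr_mono2) auto
  also have "\<dots> = 8 powr s * (a + b) powr - s"
    using ab by (simp add: powr_divide powr_minus_divide)
  finally show "cub_term s a b A \<le> 8 powr s * (a + b) powr - s" .
qed

lemma cub_polynomial_bounds:
  fixes s \<alpha> \<beta> :: real
  assumes s: "0 \<le> s" and \<alpha>: "0 \<le> \<alpha>" "\<alpha> \<le> 4" and \<beta>: "0 \<le> \<beta>" "\<beta> \<le> 1"
  shows "\<bar>\<alpha> - \<beta>\<bar> \<le> 4"
    and "\<bar>s * (\<alpha> - \<beta>)^2 + (\<alpha>^2 - \<beta>^2)\<bar> \<le> 16 * (s + 1)"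
    and "\<bar>s^2 * (\<alpha> - \<beta>)^3 + 3 * s * (\<alpha> - \<beta>) * (\<alpha>^2 - \<beta>^2) + 2 * (\<alpha>^3 - \<beta>^3)\<bar>
           \<le> 64 * ((s + 1) * (s + 2))"
proof -
  show u: "\<bar>\<alpha> - \<beta>\<bar> \<le> 4" using \<alpha> \<beta> by linarith
  have le: "\<alpha>^2 \<le> 16" "\<alpha>^3 \<le> 64" "\<beta>^2 \<le> 1" "\<beta>^3 \<le> 1"
    using power_mono[OF \<alpha>(2,1), of 2] power_mono[OF \<alpha>(2,1), of 3]
      power_mono[OF \<beta>(2,1), of 2] power_mono[OF \<beta>(2,1), of 3] by simp_all
  have ge: "0 \<le> \<alpha>^2" "0 \<le> \<alpha>^3" "0 \<le> \<beta>^2" "0 \<le> \<beta>^3"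
    using \<alpha> \<beta> by simp_all
  have v: "\<bar>\<alpha>^2 - \<beta>^2\<bar> \<le> 16" using le ge by linarith
  have z: "\<bar>\<alpha>^3 - \<beta>^3\<bar> \<le> 64" using le ge by linarith
  have u2: "\<bar>\<alpha> - \<beta>\<bar>^2 \<le> 4^2" and u3: "\<bar>\<alpha> - \<beta>\<bar>^3 \<le> 4^3"
    using u by (intro power_mono; simp)+
  have uv: "\<bar>\<alpha> - \<beta>\<bar> * \<bar>\<alpha>^2 - \<beta>^2\<bar> \<le> 4 * 16"
    using u v by (intro mult_mono) auto
  have "\<bar>s * (\<alpha> - \<beta>)^2 + (\<alpha>^2 - \<beta>^2)\<bar> \<le> s * \<bar>\<alpha> - \<beta>\<bar>^2 + \<bar>\<alpha>^2 - \<beta>^2\<bar>"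
    using s abs_triangle_ineq[of "s * (\<alpha> - \<beta>)^2"] by (simp add: abs_mult)
  also have "\<dots> \<le> s * 4^2 + 16"
    using s u2 v by (intro add_mono mult_left_mono) auto
  finally show "\<bar>s * (\<alpha> - \<beta>)^2 + (\<alpha>^2 - \<beta>^2)\<bar> \<le> 16 * (s + 1)" by simp
  have "\<bar>s^2 * (\<alpha> - \<beta>)^3 + 3 * s * (\<alpha> - \<beta>) * (\<alpha>^2 - \<beta>^2) + 2 * (\<alpha>^3 - \<beta>^3)\<bar>
      \<le> \<bar>s^2 * (\<alpha> - \<beta>)^3\<bar> + \<bar>3 * s * (\<alpha> - \<beta>) * (\<alpha>^2 - \<beta>^2)\<bar> + \<bar>2 * (\<alpha>^3 - \<beta>^3)\<bar>"
    by linarith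
  also have "\<dots> = s^2 * \<bar>\<alpha> - \<beta>\<bar>^3 + 3 * s * (\<bar>\<alpha> - \<beta>\<bar> * \<bar>\<alpha>^2 - \<beta>^2\<bar>) + 2 * \<bar>\<alpha>^3 - \<beta>^3\<bar>"
    using s by (simp only: abs_mult power_abs abs_numeral abs_of_nonneg mult.assoc)
  also have "\<dots> \<le> s^2 * 4^3 + 3 * s * (4 * 16) + 2 * 64"
    using s u3 uv z by (intro add_mono mult_left_mono) auto
  finally show "\<bar>s^2 * (\<alpha> - \<beta>)^3 + 3 * s * (\<alpha> - \<beta>) * (\<alpha>^2 - \<beta>^2) + 2 * (\<alpha>^3 - \<beta>^3)\<bar>
           \<le> 64 * ((s + 1) * (s + 2))"
    by (simp add: algebra_simps power2_eq_square)
qed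

lemma cub_term_derivative_bounds:
  assumes s: "s \<ge> 0" and ab: "a \<ge> 0" "b \<ge> 0" "a + b > 0" and A: "A \<in> {1/4<..<1}"
  shows "\<bar>cub_term s a b A\<bar> \<le> 8 powr s * (a + b) powr - s"
    and "\<bar>cub_term_d1 s a b A\<bar> \<le> (4 * s * 8 powr s) * (a + b) powr - s"
    and "\<bar>cub_term_d2 s a b A\<bar> \<le> (16 * s * (s + 1) * 8 powr s) * (a + b) powr - s"
    and "\<bar>cub_term_d3 s a b A\<bar> \<le> (64 * s * ((s + 1) * (s + 2)) * 8 powr s) * (a + b) powr - s"
proof -
  note basic = cub_term_basic_bounds[OF ab A]
  note poly = cub_polynomial_bounds[OF s basic(2-5)]
  have scaled: "\<bar>s * cub_term s a b A * P\<bar> \<le> (c * s * 8 powr s) * (a + b) powr - s"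
    if P: "\<bar>P\<bar> \<le> c" for P c
  proof -
    have "\<bar>s * cub_term s a b A * P\<bar> = s * cub_term s a b A * \<bar>P\<bar>"
      using s basic(6) by (simp add: abs_mult)
    also have "\<dots> \<le> s * (8 powr s * (a + b) powr - s) * c"
      using s basic(6) basic(7)[OF s] P by (intro mult_mono) auto
    finally show ?thesis by (simp add: algebra_simps)
  qed
  show "\<bar>cub_term s a b A\<bar> \<le> 8 powr s * (a + b) powr - s"
    using basic(6) basic(7)[OF s] by simp
  show "\<bar>cub_term_d1 s a b A\<bar> \<le> (4 * s * 8 powr s) * (a + b) powr - s"
    using scaled[OF poly(1)] by (simp add: cub_term_d1_def)
  show "\<bar>cub_term_d2 s a b A\<bar> \<le> (16 * s * (s + 1) * 8 powr s) * (a + b) powr - s"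
    using scaled[OF poly(2)] by (simp add: cub_term_d2_def algebra_simps)
  show "\<bar>cub_term_d3 s a b A\<bar> \<le> (64 * s * ((s + 1) * (s + 2)) * 8 powr s) * (a + b) powr - s"
    using scaled[OF poly(3)] by (simp add: cub_term_d3_def algebra_simps)
qed

section \<open>Convergence of the lattice sum\<close>

definition nonzero_triples :: "(int \<times> int \<times> int) set" where
  "nonzero_triples = UNIV - {(0, 0, 0)}"

definition cub_a :: "int \<times> int \<times> int \<Rightarrow> real" where
  "cub_a = (\<lambda>(i, j, k). (real_of_int (i + j))^2)"

definition cub_b :: "int \<times> int \<times> int \<Rightarrow> real" where
  "cub_b = (\<lambda>(i, j, k). (real_of_int (j + k))^2 + (real_of_int (i + k))^2)"

lemma L_eq_infsum_cub_term:
  "L A s = (\<Sum>\<^sub>\<infinity>p\<in>nonzero_triples. cub_term s (cub_a p) (cub_b p) A)"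
  unfolding L_def nonzero_triples_def
  by (intro infsum_cong) (auto simp: cub_term_def cub_a_def cub_b_def cub_form_def add.assoc)

lemma cub_a_nonneg: "0 \<le> cub_a p"
  by (simp add: cub_a_def split: prod.split)

lemma cub_b_nonneg: "0 \<le> cub_b p"
  by (simp add: cub_b_def split: prod.split)

lemma sum_squares_le_cub_a_plus_cub_b:
  "(real_of_int i)^2 + (real_of_int j)^2 + (real_of_int k)^2 \<le> cub_a (i, j, k) + cub_b (i, j, k)"
proof -
  have "cub_a (i, j, k) + cub_b (i, j, k) =
      (real_of_int i)^2 + (real_of_int j)^2 + (real_of_int k)^2 + (real_of_int (i + j + k))^2"
    by (simp add: cub_a_def cub_b_def power2_eq_square algebra_simps)
  then show ?thesis by simp
qed

lemma one_le_sum_squares: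
  assumes "(i, j, k) \<in> nonzero_triples"
  shows "1 \<le> (real_of_int i)^2 + (real_of_int j)^2 + (real_of_int k)^2"
proof -
  have "i \<noteq> 0 \<or> j \<noteq> 0 \<or> k \<noteq> 0" using assms by (auto simp: nonzero_triples_def)
  then have "0 < i^2 \<or> 0 < j^2 \<or> 0 < k^2" by simp
  then have "0 < i^2 + j^2 + k^2"
    using zero_le_power2[of i] zero_le_power2[of j] zero_le_power2[of k] by (elim disjE) linarith+
  then have "1 \<le> real_of_int (i^2 + j^2 + k^2)" by linarith
  then show ?thesis by simp
qed

lemma cub_a_plus_cub_b_ge_1:
  assumes "p \<in> nonzero_triples"
  shows "1 \<le> cub_a p + cub_b p"
  using assms one_le_sum_squares sum_squares_le_cub_a_plus_cub_b order_trans
  by (cases p) blast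

lemma cub_coeffs:
  assumes "p \<in> nonzero_triples"
  shows "0 \<le> cub_a p" "0 \<le> cub_b p" "0 < cub_a p + cub_b p"
  using cub_a_nonneg cub_b_nonneg cub_a_plus_cub_b_ge_1[OF assms] by auto

lemma summable_on_one_plus_abs_powr_int:
  assumes q: "q > 1"
  shows "(\<lambda>n::int. (1 + \<bar>real_of_int n\<bar>) powr - q) summable_on UNIV"
proof -
  let ?h = "\<lambda>n::int. (1 + \<bar>real_of_int n\<bar>) powr - q"
  have "summable (\<lambda>n::nat. real n powr - q)" using q by (simp add: summable_real_powr_iff)
  then have "summable (\<lambda>n::nat. (1 + real n) powr - q)"
    by (subst (asm) summable_Suc_iff [symmetric]) (simp add: add.commute)
  then have nat: "(\<lambda>n::nat. (1 + real n) powr - q) summable_on UNIV"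
    by (simp add: summable_on_UNIV_nonneg_real_iff)
  have "?h summable_on range int"
    using nat by (subst summable_on_reindex) (auto simp: o_def)
  moreover have "?h summable_on range (\<lambda>n. - int n)"
    using nat by (subst summable_on_reindex) (auto simp: o_def inj_on_def)
  ultimately have "?h summable_on (range int \<union> range (\<lambda>n. - int n))"
    by (rule summable_on_union)
  moreover have "range int \<union> range (\<lambda>n. - int n) = UNIV"
  proof -
    have "n \<in> range int \<union> range (\<lambda>n. - int n)" for n :: int
      by (cases "n \<ge> 0") (auto intro: image_eqI[of _ _ "nat n"] image_eqI[of _ _ "nat (- n)"])
    then show ?thesis by blast
  qed
  ultimately show ?thesis by simp
qed

lemma summable_on_times_nonneg:
  fixes f g :: "_ \<Rightarrow> real"
  assumes f: "f summable_on A" and g: "g summable_on B"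
    and "\<And>x. x \<in> A \<Longrightarrow> 0 \<le> f x" "\<And>y. y \<in> B \<Longrightarrow> 0 \<le> g y"
  shows "(\<lambda>(x, y). f x * g y) summable_on A \<times> B"
proof (rule summable_on_SigmaI)
  fix x
  show "((\<lambda>y. case (x, y) of (x, y) \<Rightarrow> f x * g y) has_sum f x * infsum g B) B"
    using has_sum_cmult_right[OF has_sum_infsum[OF g]] by simp
next
  show "(\<lambda>x. f x * infsum g B) summable_on A"
    using f by (rule summable_on_cmult_left)
qed (use assms in auto)

lemma sum_squares_powr_le:
  fixes x y z s :: real
  assumes s: "s \<ge> 0" and N_ge: "1 \<le> x^2 + y^2 + z^2"
  shows "(x^2 + y^2 + z^2) powr - s \<le>
    4 powr s * ((1 + \<bar>x\<bar>) powr - (2 * s / 3) * (1 + \<bar>y\<bar>) powr - (2 * s / 3) * (1 + \<bar>z\<bar>) powr - (2 * s / 3))"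
proof -
  define N where "N = x^2 + y^2 + z^2"
  have "1 \<le> N" using N_ge by (simp add: N_def)
  define c where "c = (4 * N) powr - (s / 3)"
  have factor_ge: "c \<le> (1 + \<bar>t\<bar>) powr - (2 * s / 3)" if "t^2 \<le> N" for t
  proof -
    have "0 \<le> (\<bar>t\<bar> - 1)^2" by simp
    then have "(1 + \<bar>t\<bar>)^2 \<le> 2 * (1 + t^2)" by (simp add: power2_eq_square algebra_simps)
    also have "\<dots> \<le> 4 * N" using that \<open>1 \<le> N\<close> by simp
    finally have "((1 + \<bar>t\<bar>)^2) powr - (s / 3) \<ge> (4 * N) powr - (s / 3)"
      using s by (intro powr_mono2') auto
    moreover have "((1 + \<bar>t\<bar>)^2) powr - (s / 3) = (1 + \<bar>t\<bar>) powr - (2 * s / 3)"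
      by (simp add: powr_powr flip: powr_numeral)
    ultimately show ?thesis by (simp add: c_def)
  qed
  have "c * c * c \<le> (1 + \<bar>x\<bar>) powr - (2 * s / 3) * (1 + \<bar>y\<bar>) powr - (2 * s / 3) * (1 + \<bar>z\<bar>) powr - (2 * s / 3)"
    using factor_ge[of x] factor_ge[of y] factor_ge[of z]
    by (intro mult_mono) (auto simp: N_def c_def)
  moreover have "c * c * c = (4 * N) powr (of_nat 3 * - (s / 3))"
    unfolding c_def power3_eq_cube[symmetric] using \<open>1 \<le> N\<close> by (intro powr_power) simp
  moreover have "\<dots> = 4 powr - s * N powr - s"
    using \<open>1 \<le> N\<close> by (simp add: powr_mult)
  ultimately have le: "4 powr - s * N powr - s \<le>
      (1 + \<bar>x\<bar>) powr - (2 * s / 3) * (1 + \<bar>y\<bar>) powr - (2 * s / 3) * (1 + \<bar>z\<bar>) powr - (2 * s / 3)"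
    by simp
  have "4 powr s * 4 powr - s = (1::real)" by (simp add: powr_minus)
  then have "N powr - s = 4 powr s * (4 powr - s * N powr - s)"
    by (simp add: mult.assoc [symmetric])
  also have "\<dots> \<le> 4 powr s *
      ((1 + \<bar>x\<bar>) powr - (2 * s / 3) * (1 + \<bar>y\<bar>) powr - (2 * s / 3) * (1 + \<bar>z\<bar>) powr - (2 * s / 3))"
    using le by (intro mult_left_mono) simp_all
  finally show ?thesis by (simp add: N_def)
qed

lemma summable_on_sum_squares_powr:
  assumes s: "s > 3/2"
  shows "(\<lambda>(i, j, k). ((real_of_int i)^2 + (real_of_int j)^2 + (real_of_int k)^2) powr - s)
           summable_on nonzero_triples"
proof -
  define h where "h n = (1 + \<bar>real_of_int n\<bar>) powr - (2 * s / 3)" for n :: int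
  have h: "h summable_on UNIV" unfolding h_def
    by (rule summable_on_one_plus_abs_powr_int) (use s in simp)
  have h_nonneg: "0 \<le> h n" for n by (simp add: h_def)
  have "(\<lambda>(j, k). h j * h k) summable_on UNIV \<times> UNIV"
    by (rule summable_on_times_nonneg[OF h h]) (simp_all add: h_nonneg)
  then have "(\<lambda>(i, jk). h i * (case jk of (j, k) \<Rightarrow> h j * h k)) summable_on UNIV \<times> UNIV"
    by (intro summable_on_times_nonneg[OF h]) (auto simp: h_nonneg split: prod.split)
  moreover have "(\<lambda>(i, jk). h i * (case jk of (j, k) \<Rightarrow> h j * h k)) = (\<lambda>(i, j, k). h i * h j * h k)"
    by (auto simp: fun_eq_iff mult.assoc)
  ultimately have "(\<lambda>(i, j, k). h i * h j * h k) summable_on UNIV"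
    by simp
  then have "(\<lambda>(i, j, k). h i * h j * h k) summable_on nonzero_triples"
    by (rule summable_on_subset_banach) simp
  then have S: "(\<lambda>p. 4 powr s * (case p of (i, j, k) \<Rightarrow> h i * h j * h k)) summable_on nonzero_triples"
    by (rule summable_on_cmult_right)
  show ?thesis
  proof (rule summable_on_comparison_test[OF S])
    fix p assume p: "p \<in> nonzero_triples"
    obtain i j k where p_eq: "p = (i, j, k)" by (cases p)
    have "1 \<le> (real_of_int i)^2 + (real_of_int j)^2 + (real_of_int k)^2"
      using one_le_sum_squares p p_eq by simp
    from sum_squares_powr_le[OF _ this, of s] s
    show "(case p of (i, j, k) \<Rightarrow> ((real_of_int i)^2 + (real_of_int j)^2 + (real_of_int k)^2) powr - s)
        \<le> 4 powr s * (case p of (i, j, k) \<Rightarrow> h i * h j * h k)"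
      by (simp add: p_eq h_def)
  qed (simp split: prod.split)
qed

lemma summable_on_cub_majorant:
  assumes s: "s > 3/2"
  shows "(\<lambda>p. (cub_a p + cub_b p) powr - s) summable_on nonzero_triples"
proof (rule summable_on_comparison_test[OF summable_on_sum_squares_powr[OF s]])
  fix p assume p: "p \<in> nonzero_triples"
  obtain i j k where p_eq: "p = (i, j, k)" by (cases p)
  have "1 \<le> (real_of_int i)^2 + (real_of_int j)^2 + (real_of_int k)^2"
    using one_le_sum_squares p p_eq by simp
  then show "(cub_a p + cub_b p) powr - s \<le>
      (case p of (i, j, k) \<Rightarrow> ((real_of_int i)^2 + (real_of_int j)^2 + (real_of_int k)^2) powr - s)"
    using sum_squares_le_cub_a_plus_cub_b[of i j k] s p_eq by (simp add: powr_mono2')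
qed simp

lemma summable_on_cub_bounded:
  assumes s: "s > 3/2"
    and bound: "\<And>p. p \<in> nonzero_triples \<Longrightarrow> \<bar>f p\<bar> \<le> C * (cub_a p + cub_b p) powr - s"
  shows "f summable_on nonzero_triples"
  using summable_on_cmult_right[OF summable_on_cub_majorant[OF s]]
  by (rule summable_on_abs_le) (rule bound)

lemma has_real_derivative_infsum_cub:
  fixes g g' g'' :: "real \<Rightarrow> real \<Rightarrow> real \<Rightarrow> real"
  assumes s: "s > 3/2" and x: "x \<in> {1/4<..<1}"
    and g: "\<And>a b A. A * a + b > 0 \<Longrightarrow> A + 1 > 0 \<Longrightarrow> (g a b has_real_derivative g' a b A) (at A)"
    and g': "\<And>a b A. A * a + b > 0 \<Longrightarrow> A + 1 > 0 \<Longrightarrow> (g' a b has_real_derivative g'' a b A) (at A)"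
    and bounds: "\<And>a b A. 0 \<le> a \<Longrightarrow> 0 \<le> b \<Longrightarrow> 0 < a + b \<Longrightarrow> A \<in> {1/4<..<1} \<Longrightarrow>
        \<bar>g a b A\<bar> \<le> C * (a + b) powr - s \<and> \<bar>g' a b A\<bar> \<le> C' * (a + b) powr - s
        \<and> \<bar>g'' a b A\<bar> \<le> C'' * (a + b) powr - s"
  shows "((\<lambda>A. \<Sum>\<^sub>\<infinity>p\<in>nonzero_triples. g (cub_a p) (cub_b p) A) has_real_derivative
           (\<Sum>\<^sub>\<infinity>p\<in>nonzero_triples. g' (cub_a p) (cub_b p) x)) (at x)"
proof (rule has_real_derivative_has_sum[where S = "{1/4<..<1}"
      and M = "\<lambda>p. C'' * (cub_a p + cub_b p) powr - s"])
  have bound: "\<bar>g (cub_a p) (cub_b p) A\<bar> \<le> C * (cub_a p + cub_b p) powr - s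
      \<and> \<bar>g' (cub_a p) (cub_b p) A\<bar> \<le> C' * (cub_a p + cub_b p) powr - s
      \<and> \<bar>g'' (cub_a p) (cub_b p) A\<bar> \<le> C'' * (cub_a p + cub_b p) powr - s"
    if "p \<in> nonzero_triples" "A \<in> {1/4<..<1}" for p A
    using bounds[OF cub_coeffs[OF that(1)] that(2)] .
  have pos: "A * cub_a p + cub_b p > 0" "A + 1 > 0" if "p \<in> nonzero_triples" "A \<in> {1/4<..<1}" for p A
    using cub_term_basic_bounds(1)[OF cub_coeffs that(2)] that by auto
  show "(g (cub_a p) (cub_b p) has_real_derivative g' (cub_a p) (cub_b p) t) (at t)"
    if "p \<in> nonzero_triples" "t \<in> {1/4<..<1}" for p t
    using g pos[OF that] by blast
  show "(g' (cub_a p) (cub_b p) has_real_derivative g'' (cub_a p) (cub_b p) t) (at t)"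
    if "p \<in> nonzero_triples" "t \<in> {1/4<..<1}" for p t
    using g' pos[OF that] by blast
  show "\<bar>g'' (cub_a p) (cub_b p) t\<bar> \<le> C'' * (cub_a p + cub_b p) powr - s"
    if "p \<in> nonzero_triples" "t \<in> {1/4<..<1}" for p t
    using bound[OF that] by blast
  show "(\<lambda>p. C'' * (cub_a p + cub_b p) powr - s) summable_on nonzero_triples"
    using summable_on_cub_majorant[OF s] by (rule summable_on_cmult_right)
  show "((\<lambda>p. g (cub_a p) (cub_b p) t) has_sum (\<Sum>\<^sub>\<infinity>p\<in>nonzero_triples. g (cub_a p) (cub_b p) t))
      nonzero_triples" if "t \<in> {1/4<..<1}" for t
    using bound[OF _ that] by (intro has_sum_infsum summable_on_cub_bounded[OF s]) blast
  show "((\<lambda>p. g' (cub_a p) (cub_b p) x) has_sum (\<Sum>\<^sub>\<infinity>p\<in>nonzero_triples. g' (cub_a p) (cub_b p) x))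
      nonzero_triples"
    using bound[OF _ x] by (intro has_sum_infsum summable_on_cub_bounded[OF s]) blast
qed (use x in auto)

lemma has_real_derivative_L:
  assumes s: "s > 3/2" and x: "x \<in> {1/4<..<1}"
  shows "((\<lambda>A. L A s) has_real_derivative
           (\<Sum>\<^sub>\<infinity>p\<in>nonzero_triples. cub_term_d1 s (cub_a p) (cub_b p) x)) (at x)"
  unfolding L_eq_infsum_cub_term
  by (rule has_real_derivative_infsum_cub[OF s x has_real_derivative_cub_term has_real_derivative_cub_term_d1,
        where C = "8 powr s" and C' = "4 * s * 8 powr s" and C'' = "16 * s * (s + 1) * 8 powr s"])
    (use s in \<open>auto intro!: cub_term_derivative_bounds\<close>)

lemma has_real_derivative_deriv_L:
  assumes s: "s > 3/2" and x: "x \<in> {1/4<..<1}"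
  shows "(deriv (\<lambda>A. L A s) has_real_derivative
           (\<Sum>\<^sub>\<infinity>p\<in>nonzero_triples. cub_term_d2 s (cub_a p) (cub_b p) x)) (at x)"
proof -
  have D: "((\<lambda>A. \<Sum>\<^sub>\<infinity>p\<in>nonzero_triples. cub_term_d1 s (cub_a p) (cub_b p) A) has_real_derivative
           (\<Sum>\<^sub>\<infinity>p\<in>nonzero_triples. cub_term_d2 s (cub_a p) (cub_b p) x)) (at x)"
    by (rule has_real_derivative_infsum_cub[OF s x has_real_derivative_cub_term_d1 has_real_derivative_cub_term_d2,
          where C = "4 * s * 8 powr s" and C' = "16 * s * (s + 1) * 8 powr s"
            and C'' = "64 * s * ((s + 1) * (s + 2)) * 8 powr s"])
      (use s in \<open>auto intro!: cub_term_derivative_bounds\<close>)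
  have eq: "(\<Sum>\<^sub>\<infinity>p\<in>nonzero_triples. cub_term_d1 s (cub_a p) (cub_b p) A) = deriv (\<lambda>A. L A s) A"
    if "A \<in> {1/4<..<1}" for A
    using DERIV_imp_deriv[OF has_real_derivative_L[OF s that]] by simp
  show ?thesis
    by (rule has_field_derivative_transform_within_open[OF D _ x eq]) auto
qed

section \<open>Symmetry at the body-centred cubic lattice\<close>

definition bcc_x :: "int \<times> int \<times> int \<Rightarrow> real" where
  "bcc_x = (\<lambda>(i, j, k). real_of_int (i + j))"

definition bcc_y :: "int \<times> int \<times> int \<Rightarrow> real" where
  "bcc_y = (\<lambda>(i, j, k). real_of_int (i + j + 2 * k))"

definition bcc_z :: "int \<times> int \<times> int \<Rightarrow> real" where
  "bcc_z = (\<lambda>(i, j, k). real_of_int (j - i))"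

definition swap_xy :: "int \<times> int \<times> int \<Rightarrow> int \<times> int \<times> int" where
  "swap_xy = (\<lambda>(i, j, k). (i + k, j + k, - k))"

definition swap_xz :: "int \<times> int \<times> int \<Rightarrow> int \<times> int \<times> int" where
  "swap_xz = (\<lambda>(i, j, k). (- i, j, i + k))"

text \<open>The map \<open>(i, j, k) \<mapsto> (x, y, z)\<close> identifies the lattice with the body-centred cubic
  lattice \<open>{x \<equiv> y \<equiv> z mod 2}\<close>; \<^const>\<open>swap_xy\<close> and \<^const>\<open>swap_xz\<close> are the pull-backs of
  coordinate transpositions.\<close>

definition bcc_norm2 :: "int \<times> int \<times> int \<Rightarrow> real" where
  "bcc_norm2 p = (bcc_x p)^2 + (bcc_y p)^2 + (bcc_z p)^2"

lemma cub_a_eq_bcc: "cub_a p = (bcc_x p)^2"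
  by (cases p) (simp add: cub_a_def bcc_x_def)

lemma cub_b_eq_bcc: "2 * cub_b p = (bcc_y p)^2 + (bcc_z p)^2"
  by (cases p) (simp add: cub_b_def bcc_y_def bcc_z_def power2_eq_square algebra_simps)

lemma cub_a_plus_2_cub_b: "cub_a p + 2 * cub_b p = bcc_norm2 p"
  by (simp add: bcc_norm2_def cub_a_eq_bcc cub_b_eq_bcc add.assoc)

lemma bcc_swap_xy: "bcc_x (swap_xy p) = bcc_y p" "bcc_y (swap_xy p) = bcc_x p" "bcc_z (swap_xy p) = bcc_z p"
  by (cases p; simp add: bcc_x_def bcc_y_def bcc_z_def swap_xy_def algebra_simps)+

lemma bcc_swap_xz: "bcc_x (swap_xz p) = bcc_z p" "bcc_z (swap_xz p) = bcc_x p" "bcc_y (swap_xz p) = bcc_y p"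
  by (cases p; simp add: bcc_x_def bcc_y_def bcc_z_def swap_xz_def algebra_simps)+

lemma bcc_norm2_swap: "bcc_norm2 (swap_xy p) = bcc_norm2 p" "bcc_norm2 (swap_xz p) = bcc_norm2 p"
  by (simp_all add: bcc_norm2_def bcc_swap_xy bcc_swap_xz add_ac)

lemma bij_betw_swap_xy: "bij_betw swap_xy nonzero_triples nonzero_triples"
  by (rule bij_betw_byWitness[where f' = swap_xy]) (auto simp: swap_xy_def nonzero_triples_def)

lemma bij_betw_swap_xz: "bij_betw swap_xz nonzero_triples nonzero_triples"
  by (rule bij_betw_byWitness[where f' = swap_xz]) (auto simp: swap_xz_def nonzero_triples_def)

lemma infsum_eq_0_if_odd_under_bij:
  fixes h :: "'a \<Rightarrow> real"
  assumes \<sigma>: "bij_betw \<sigma> A A" and odd: "\<And>x. x \<in> A \<Longrightarrow> h (\<sigma> x) = - h x"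
  shows "infsum h A = 0"
proof -
  have "infsum h A = infsum (\<lambda>x. h (\<sigma> x)) A"
    by (rule infsum_reindex_bij_betw[OF \<sigma>, symmetric])
  also have "\<dots> = infsum (\<lambda>x. - h x) A"
    using odd by (rule infsum_cong)
  also have "\<dots> = - infsum h A"
    by (rule infsum_uminus)
  finally show ?thesis by simp
qed

lemma infsum_bcc_radial_times_diff_squares_eq_0:
  fixes \<phi> :: "real \<Rightarrow> real"
  shows "(\<Sum>\<^sub>\<infinity>p\<in>nonzero_triples. \<phi> (bcc_norm2 p) * ((bcc_x p)^2 - (bcc_y p)^2)) = 0"
    and "(\<Sum>\<^sub>\<infinity>p\<in>nonzero_triples. \<phi> (bcc_norm2 p) * ((bcc_x p)^2 - (bcc_z p)^2)) = 0"
  by (rule infsum_eq_0_if_odd_under_bij[OF bij_betw_swap_xy]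
      infsum_eq_0_if_odd_under_bij[OF bij_betw_swap_xz],
      simp add: bcc_swap_xy bcc_swap_xz bcc_norm2_swap algebra_simps)+

lemma summable_on_bcc_radial:
  assumes s: "s > 3/2" and Y: "\<And>p. \<bar>Y p\<bar> \<le> bcc_norm2 p"
  shows "(\<lambda>p. (3 / bcc_norm2 p) powr s / bcc_norm2 p * Y p) summable_on nonzero_triples"
proof (rule summable_on_cub_bounded[OF s, where C = "3 powr s"])
  fix p assume p: "p \<in> nonzero_triples"
  have ge: "cub_a p + cub_b p \<le> bcc_norm2 p" "1 \<le> cub_a p + cub_b p"
    using cub_a_plus_2_cub_b[of p] cub_b_nonneg[of p] cub_a_plus_cub_b_ge_1[OF p] by auto
  have "\<bar>(3 / bcc_norm2 p) powr s / bcc_norm2 p * Y p\<bar> \<le> (3 / bcc_norm2 p) powr s"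
    using ge Y[of p] by (simp add: abs_mult divide_le_eq mult_left_le)
  also have "\<dots> = 3 powr s * bcc_norm2 p powr - s"
    using ge by (simp add: powr_divide powr_minus_divide)
  also have "\<dots> \<le> 3 powr s * (cub_a p + cub_b p) powr - s"
    using ge s by (intro mult_left_mono powr_mono2') auto
  finally show "\<bar>(3 / bcc_norm2 p) powr s / bcc_norm2 p * Y p\<bar> \<le> 3 powr s * (cub_a p + cub_b p) powr - s" .
qed

lemma cub_term_d1_half:
  assumes G: "0 < a + 2 * b"
  shows "cub_term_d1 s a b (1/2) = - (4 * s / 3) * ((3 / (a + 2 * b)) powr s / (a + 2 * b)) * (a - b)"
proof -
  have "(1/2 + 1) / (1/2 * a + b) = 3 / (a + 2 * b)"
    using G by (simp add: field_simps)
  moreover have "a / (1/2 * a + b) - 1 / (1/2 + 1) = 4 * (a - b) / (3 * (a + 2 * b))"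
    using G by (simp add: field_simps)
  ultimately show ?thesis
    using G by (simp add: cub_term_d1_def cub_term_def cub_alpha_def cub_beta_def field_simps)
qed

lemma infsum_cub_term_d1_half_eq_0:
  assumes s: "s > 3/2"
  shows "(\<Sum>\<^sub>\<infinity>p\<in>nonzero_triples. cub_term_d1 s (cub_a p) (cub_b p) (1/2)) = 0"
proof -
  define V where "V p = (3 / bcc_norm2 p) powr s / bcc_norm2 p" for p
  define h_xy where "h_xy p = V p * ((bcc_x p)^2 - (bcc_y p)^2)" for p
  define h_xz where "h_xz p = V p * ((bcc_x p)^2 - (bcc_z p)^2)" for p
  have "cub_term_d1 s (cub_a p) (cub_b p) (1/2) = - (2 * s / 3) * (h_xy p + h_xz p)"
    if "p \<in> nonzero_triples" for p
  proof -
    have "0 < cub_a p + 2 * cub_b p"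
      using cub_a_plus_cub_b_ge_1[OF that] cub_b_nonneg[of p] by linarith
    then have "cub_term_d1 s (cub_a p) (cub_b p) (1/2) = - (4 * s / 3) * V p * (cub_a p - cub_b p)"
      by (simp add: cub_term_d1_half V_def cub_a_plus_2_cub_b)
    also have "cub_a p - cub_b p = ((bcc_x p)^2 - (bcc_y p)^2 + ((bcc_x p)^2 - (bcc_z p)^2)) / 2"
      using cub_a_eq_bcc[of p] cub_b_eq_bcc[of p] by simp
    finally show ?thesis
      by (simp add: h_xy_def h_xz_def algebra_simps)
  qed
  then have "(\<Sum>\<^sub>\<infinity>p\<in>nonzero_triples. cub_term_d1 s (cub_a p) (cub_b p) (1/2))
      = (\<Sum>\<^sub>\<infinity>p\<in>nonzero_triples. - (2 * s / 3) * (h_xy p + h_xz p))"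
    by (rule infsum_cong)
  also have "\<dots> = - (2 * s / 3) * (infsum h_xy nonzero_triples + infsum h_xz nonzero_triples)"
  proof -
    have "\<bar>(bcc_x p)^2 - (bcc_y p)^2\<bar> \<le> bcc_norm2 p" "\<bar>(bcc_x p)^2 - (bcc_z p)^2\<bar> \<le> bcc_norm2 p" for p
      by (auto simp: bcc_norm2_def abs_le_iff)
    then have "h_xy summable_on nonzero_triples" "h_xz summable_on nonzero_triples"
      unfolding h_xy_def h_xz_def V_def by (intro summable_on_bcc_radial[OF s]; simp)+
    then show ?thesis
      by (simp only: infsum_cmult_right summable_on_add infsum_add)
  qed
  also have "\<dots> = 0"
    using infsum_bcc_radial_times_diff_squares_eq_0[of "\<lambda>t. (3 / t) powr s / t"]
    unfolding h_xy_def [abs_def] h_xz_def [abs_def] V_def by simp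
  finally show ?thesis .
qed

lemma summable_on_cub_term_derivatives:
  assumes s: "s > 3/2" and A: "A \<in> {1/4<..<1}"
  shows "(\<lambda>p. cub_term_d1 s (cub_a p) (cub_b p) A) summable_on nonzero_triples"
    and "(\<lambda>p. cub_term_d2 s (cub_a p) (cub_b p) A) summable_on nonzero_triples"
proof -
  show "(\<lambda>p. cub_term_d1 s (cub_a p) (cub_b p) A) summable_on nonzero_triples"
    by (rule summable_on_cub_bounded[OF s, where C = "4 * s * 8 powr s"])
      (use cub_term_derivative_bounds(2)[OF _ cub_coeffs A] s in auto)
  show "(\<lambda>p. cub_term_d2 s (cub_a p) (cub_b p) A) summable_on nonzero_triples"
    by (rule summable_on_cub_bounded[OF s, where C = "16 * s * (s + 1) * 8 powr s"])
      (use cub_term_derivative_bounds(3)[OF _ cub_coeffs A] s in auto)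
qed

lemma cub_term_d2_plus_d1:
  "cub_term_d2 s a b A + 2 * cub_beta A * cub_term_d1 s a b A
     = s * (s + 1) * cub_term s a b A * (cub_alpha a b A - cub_beta A)^2"
  by (simp add: cub_term_d1_def cub_term_d2_def power2_eq_square algebra_simps)

lemma infsum_cub_term_d2_half_pos:
  assumes s: "s > 3/2"
  shows "0 < (\<Sum>\<^sub>\<infinity>p\<in>nonzero_triples. cub_term_d2 s (cub_a p) (cub_b p) (1/2))"
proof -
  define E where "E p = cub_term_d2 s (cub_a p) (cub_b p) (1/2)
      + 2 * cub_beta (1/2) * cub_term_d1 s (cub_a p) (cub_b p) (1/2)" for p
  have half: "(1/2::real) \<in> {1/4<..<1}" by simp
  note summable = summable_on_cub_term_derivatives[OF s half]
  have "E summable_on nonzero_triples"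
    unfolding E_def by (intro summable_on_add summable_on_cmult_right summable)
  have "infsum E nonzero_triples = (\<Sum>\<^sub>\<infinity>p\<in>nonzero_triples. cub_term_d2 s (cub_a p) (cub_b p) (1/2))
      + 2 * cub_beta (1/2) * (\<Sum>\<^sub>\<infinity>p\<in>nonzero_triples. cub_term_d1 s (cub_a p) (cub_b p) (1/2))"
    unfolding E_def using summable by (simp only: infsum_cmult_right summable_on_cmult_right infsum_add)
  then have "(\<Sum>\<^sub>\<infinity>p\<in>nonzero_triples. cub_term_d2 s (cub_a p) (cub_b p) (1/2)) = infsum E nonzero_triples"
    using infsum_cub_term_d1_half_eq_0[OF s] by simp
  moreover have "0 < infsum E nonzero_triples"
  proof (rule has_sum_strict_mono[OF has_sum_0_simp has_sum_infsum[OF \<open>E summable_on nonzero_triples\<close>]])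
    have E_eq: "E p = s * (s + 1) * cub_term s (cub_a p) (cub_b p) (1/2)
        * (cub_alpha (cub_a p) (cub_b p) (1/2) - cub_beta (1/2))^2" for p
      unfolding E_def by (rule cub_term_d2_plus_d1)
    show "0 \<le> E p" for p
      using s by (simp add: E_eq cub_term_def)
    show "(1, 1, 0) \<in> nonzero_triples"
      by (simp add: nonzero_triples_def)
    show "0 < E (1, 1, 0)"
      using s by (simp add: E_eq cub_a_def cub_b_def cub_term_def cub_alpha_def cub_beta_def)
  qed
  ultimately show ?thesis by simp
qed

theorem theorem3p1:
  fixes s :: real
  assumes "s > 3/2"
  shows "((\<lambda>A. L A s) has_real_derivative 0) (at (1/2))
       \<and> (\<exists>D2>0. (deriv (\<lambda>A. L A s) has_real_derivative D2) (at (1/2)))"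
proof
  have half: "(1/2::real) \<in> {1/4<..<1}" by simp
  show "((\<lambda>A. L A s) has_real_derivative 0) (at (1/2))"
    using has_real_derivative_L[OF assms half] infsum_cub_term_d1_half_eq_0[OF assms] by simp
  show "\<exists>D2>0. (deriv (\<lambda>A. L A s) has_real_derivative D2) (at (1/2))"
    using has_real_derivative_deriv_L[OF assms half] infsum_cub_term_d2_half_pos[OF assms] by blast
qed

end
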